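(* Every light confluent epimorphism between rooted trees is a composition of elementary light confluent epimorphisms.
   Context: A graph is a pair $(V,E)$ with $E\subseteq V^2$ reflexive and symmetric; a tree is a finite graph in which any two distinct vertices are joined by a unique sequence of pairwise distinct vertices with consecutive ones adjacent. A rooted tree is a tree with a distinguished root $r$; $x\le y$ iff the path from $r$ to $y$ contains $x$. Epimorphisms between rooted trees: vertex maps sending edges to edges, surjective on vertices and edges, root to root, order-preserving. Connected sets: not a union of two nonempty disjoint sets with no edges between; components are maximal connected subsets; for a vertex $v$, $G\setminus\{v\}$ denotes the induced subgraph on the remaining vertices. Confluent: for each connected $Q$ of the target, every component $K$ of $f^{-1}(Q)$ has $f(K)=Q$. Light: distinct vertices with the same image are never adjacent. An epimorphism $f\colon G\to H$ between rooted trees is elementary light confluent if there are a vertex $v\in G$ and two distinct components $C_1,C_2$ of $G\setminus\{v\}$ such that $f|_{C_1}$ and $f|_{C_2}$ are injective, $f(C_1)=f(C_2)$ is a component of $H\setminus\{f(v)\}$, and $f$ restricted to $G\setminus(C_1\cup C_2)$ is injective. *)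

theory Defs
  imports Main
begin

type_synonym 'a rtree = "'a set \<times> ('a \<times> 'a) set \<times> 'a"

definition verts :: "'a rtree \<Rightarrow> 'a set" where "verts T = fst T"
definition edges :: "'a rtree \<Rightarrow> ('a \<times> 'a) set" where "edges T = fst (snd T)"
definition root :: "'a rtree \<Rightarrow> 'a" where "root T = snd (snd T)"

definition is_graph :: "'a set \<Rightarrow> ('a \<times> 'a) set \<Rightarrow> bool" where
  "is_graph V E \<longleftrightarrow> E \<subseteq> V \<times> V \<and> (\<forall>x\<in>V. (x, x) \<in> E) \<and> (\<forall>x y. (x, y) \<in> E \<longrightarrow> (y, x) \<in> E)"

definition is_path :: "('a \<times> 'a) set \<Rightarrow> 'a list \<Rightarrow> 'a \<Rightarrow> 'a \<Rightarrow> bool" where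
  "is_path E p x y \<longleftrightarrow> p \<noteq> [] \<and> hd p = x \<and> last p = y \<and> distinct p \<and>
     (\<forall>i. Suc i < length p \<longrightarrow> (p ! i, p ! Suc i) \<in> E)"

definition is_tree :: "'a set \<Rightarrow> ('a \<times> 'a) set \<Rightarrow> bool" where
  "is_tree V E \<longleftrightarrow> finite V \<and> is_graph V E \<and>
     (\<forall>x\<in>V. \<forall>y\<in>V. x \<noteq> y \<longrightarrow> (\<exists>!p. is_path E p x y))"

definition rooted_tree :: "'a rtree \<Rightarrow> bool" where
  "rooted_tree T \<longleftrightarrow> is_tree (verts T) (edges T) \<and> root T \<in> verts T"

definition tree_le :: "'a rtree \<Rightarrow> 'a \<Rightarrow> 'a \<Rightarrow> bool" where
  "tree_le T x y \<longleftrightarrow> (\<exists>p. is_path (edges T) p (root T) y \<and> x \<in> set p)"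

definition epimorphism :: "('a \<Rightarrow> 'b) \<Rightarrow> 'a rtree \<Rightarrow> 'b rtree \<Rightarrow> bool" where
  "epimorphism f G H \<longleftrightarrow> rooted_tree G \<and> rooted_tree H \<and>
     f ` verts G = verts H \<and>
     (\<lambda>(a, b). (f a, f b)) ` edges G = edges H \<and>
     f (root G) = root H \<and>
     (\<forall>x\<in>verts G. \<forall>y\<in>verts G. tree_le G x y \<longrightarrow> tree_le H (f x) (f y))"

definition connected_set :: "('a \<times> 'a) set \<Rightarrow> 'a set \<Rightarrow> bool" where
  "connected_set E S \<longleftrightarrow> \<not> (\<exists>A B. A \<noteq> {} \<and> B \<noteq> {} \<and> A \<inter> B = {} \<and> A \<union> B = S \<and>
       (\<forall>a\<in>A. \<forall>b\<in>B. (a, b) \<notin> E))"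

definition component_of :: "('a \<times> 'a) set \<Rightarrow> 'a set \<Rightarrow> 'a set \<Rightarrow> bool" where
  "component_of E S K \<longleftrightarrow> K \<noteq> {} \<and> K \<subseteq> S \<and> connected_set E K \<and>
     (\<forall>L. K \<subseteq> L \<and> L \<subseteq> S \<and> connected_set E L \<longrightarrow> L = K)"

definition confluent :: "('a \<Rightarrow> 'b) \<Rightarrow> 'a rtree \<Rightarrow> 'b rtree \<Rightarrow> bool" where
  "confluent f G H \<longleftrightarrow> (\<forall>Q. Q \<subseteq> verts H \<and> connected_set (edges H) Q \<longrightarrow>
     (\<forall>K. component_of (edges G) (verts G \<inter> f -` Q) K \<longrightarrow> f ` K = Q))"

definition light :: "('a \<Rightarrow> 'b) \<Rightarrow> 'a rtree \<Rightarrow> bool" where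
  "light f G \<longleftrightarrow> (\<forall>x\<in>verts G. \<forall>y\<in>verts G. x \<noteq> y \<and> f x = f y \<longrightarrow> (x, y) \<notin> edges G)"

text \<open>Components of G minus v are the components of the vertex set V - {v}
  (the induced subgraph has exactly the edges of E between those vertices).\<close>
definition elementary_lc :: "('a \<Rightarrow> 'b) \<Rightarrow> 'a rtree \<Rightarrow> 'b rtree \<Rightarrow> bool" where
  "elementary_lc f G H \<longleftrightarrow> epimorphism f G H \<and>
     (\<exists>v\<in>verts G. \<exists>C1 C2.
        component_of (edges G) (verts G - {v}) C1 \<and>
        component_of (edges G) (verts G - {v}) C2 \<and> C1 \<noteq> C2 \<and>
        inj_on f C1 \<and> inj_on f C2 \<and> f ` C1 = f ` C2 \<and>
        component_of (edges H) (verts H - {f v}) (f ` C1) \<and>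
        inj_on f (verts G - (C1 \<union> C2)))"

text \<open>Composition of a list of maps [f1, ..., fn] as fn o ... o f1.\<close>
definition compose_list :: "('a \<Rightarrow> 'a) list \<Rightarrow> 'a \<Rightarrow> 'a" where
  "compose_list fs = foldl (\<lambda>acc g. g \<circ> acc) id fs"

end

theory Submission
  imports Defs
begin

text \<open>A light epimorphism preserves parents and depth, so two vertices with the same image have
  ancestors that are distinct siblings with the same image. For such siblings x1, x2 of maximal
  depth, f is injective on their subtrees, and confluence makes f map each of these subtrees onto
  the subtree below f x1. Folding the subtree of x2 onto that of x1 along f is then an elementary
  light confluent epimorphism onto G without the subtree of x2, and f restricted to this smaller
  tree is again a light confluent epimorphism. Induction on the number of vertices finishes the
  proof; the induction ends with f itself being elementary once it is injective off the subtree
  of x2.\<close>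

section \<open>Connected sets and components\<close>

lemma connected_setI:
  assumes "\<And>A B. A \<noteq> {} \<Longrightarrow> B \<noteq> {} \<Longrightarrow> A \<inter> B = {} \<Longrightarrow> A \<union> B = L \<Longrightarrow> \<exists>a\<in>A. \<exists>b\<in>B. (a, b) \<in> E"
  shows "connected_set E L"
  using assms unfolding connected_set_def by blast

lemma connected_setD:
  assumes "connected_set E L" "A \<noteq> {}" "B \<noteq> {}" "A \<inter> B = {}" "A \<union> B = L"
  shows "\<exists>a\<in>A. \<exists>b\<in>B. (a, b) \<in> E"
  using assms unfolding connected_set_def by blast

lemma connected_set_singleton: "connected_set E {x}"
proof (rule connected_setI)
  fix A B assume "A \<noteq> {}" "B \<noteq> {}" "A \<inter> B = {}" "A \<union> B = {x}"
  then have "A = {x}" "B = {x}" by (metis Un_empty_left Un_empty_right subset_singleton_iff Un_upper1 Un_upper2)+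
  then show "\<exists>a\<in>A. \<exists>b\<in>B. (a, b) \<in> E" using \<open>A \<inter> B = {}\<close> by blast
qed

lemma connected_set_pair:
  assumes "(a, b) \<in> E" "(b, a) \<in> E"
  shows "connected_set E {a, b}"
proof (rule connected_setI)
  fix A B assume AB: "A \<noteq> {}" "B \<noteq> {}" "A \<inter> B = {}" "A \<union> B = {a, b}"
  then obtain u w where "u \<in> A" "w \<in> B" by blast
  moreover have "u \<in> {a, b}" "w \<in> {a, b}" "u \<noteq> w" using calculation AB(3,4) by blast+
  ultimately show "\<exists>u\<in>A. \<exists>w\<in>B. (u, w) \<in> E" using assms by blast
qed

lemma connected_set_mono:
  assumes "connected_set E K" "\<And>a b. a \<in> K \<Longrightarrow> b \<in> K \<Longrightarrow> (a, b) \<in> E \<Longrightarrow> (a, b) \<in> E'"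
  shows "connected_set E' K"
proof (rule connected_setI)
  fix A B assume AB: "A \<noteq> {}" "B \<noteq> {}" "A \<inter> B = {}" "A \<union> B = K"
  from connected_setD[OF assms(1) AB] obtain a b where ab: "a \<in> A" "b \<in> B" "(a, b) \<in> E" by blast
  moreover have "a \<in> K" "b \<in> K" using ab AB(4) by auto
  ultimately show "\<exists>a\<in>A. \<exists>b\<in>B. (a, b) \<in> E'" using assms(2) by blast
qed

lemma connected_set_image:
  assumes "connected_set E K" "\<And>a b. a \<in> K \<Longrightarrow> b \<in> K \<Longrightarrow> (a, b) \<in> E \<Longrightarrow> (h a, h b) \<in> E'"
  shows "connected_set E' (h ` K)"
proof (rule connected_setI)
  fix A B assume AB: "A \<noteq> {}" "B \<noteq> {}" "A \<inter> B = {}" "A \<union> B = h ` K"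
  let ?A = "K \<inter> h -` A" and ?B = "K \<inter> h -` B"
  have "A \<subseteq> h ` K" "B \<subseteq> h ` K" using AB(4) by blast+
  then have "?A \<noteq> {}" "?B \<noteq> {}" using AB(1,2) by blast+
  moreover have "?A \<inter> ?B = {}" using AB(3) by blast
  moreover have "?A \<union> ?B = K" using AB(4) by blast
  ultimately
  obtain a b where "a \<in> ?A" "b \<in> ?B" "(a, b) \<in> E"
    using connected_setD[OF assms(1)] by meson
  then show "\<exists>a\<in>A. \<exists>b\<in>B. (a, b) \<in> E'" using assms(2) by blast
qed

lemma connected_set_by_descent:
  fixes \<mu> :: "'a \<Rightarrow> nat"
  assumes "x \<in> S"
    and descent: "\<And>a. a \<in> S \<Longrightarrow> a \<noteq> x \<Longrightarrow> q a \<in> S \<and> (q a, a) \<in> E \<and> (a, q a) \<in> E \<and> \<mu> (q a) < \<mu> a"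
  shows "connected_set E S"
proof (rule connected_setI)
  fix A B assume AB: "A \<noteq> {}" "B \<noteq> {}" "A \<inter> B = {}" "A \<union> B = S"
  show "\<exists>a\<in>A. \<exists>b\<in>B. (a, b) \<in> E"
  proof (rule ccontr)
    assume no_edge: "\<not> ?thesis"
    have same_side: "a \<in> A \<longleftrightarrow> x \<in> A" if "a \<in> S" for a
      using that
    proof (induction a rule: measure_induct_rule[where f = \<mu>])
      case (less a)
      show ?case
      proof (cases "a = x")
        case False
        with descent[OF less.prems] less.IH
        have "q a \<in> S" "q a \<in> A \<longleftrightarrow> x \<in> A" "(q a, a) \<in> E" "(a, q a) \<in> E" by auto
        then show ?thesis using no_edge AB(3,4) less.prems by blast
      qed simp
    qed
    obtain a b where "a \<in> A" "b \<in> B" using AB by blast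
    then show False using same_side AB by blast
  qed
qed

lemma component_ofI:
  assumes "K \<noteq> {}" "K \<subseteq> S" "connected_set E K"
    and no_exit: "\<And>a b. a \<in> K \<Longrightarrow> b \<in> S - K \<Longrightarrow> (a, b) \<notin> E"
  shows "component_of E S K"
  unfolding component_of_def
proof (intro conjI allI impI assms(1-3))
  fix L assume L: "K \<subseteq> L \<and> L \<subseteq> S \<and> connected_set E L"
  show "L = K"
  proof (rule ccontr)
    assume "L \<noteq> K"
    then obtain a b where "a \<in> K" "b \<in> L - K" "(a, b) \<in> E"
      using connected_setD[of E L K "L - K"] L assms(1) by blast
    then show False using no_exit L by blast
  qed
qed

lemma component_of_exists:
  assumes "finite S" "K \<subseteq> S" "K \<noteq> {}" "connected_set E K"
  obtains K' where "K \<subseteq> K'" "component_of E S K'"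
proof -
  let ?F = "{L. K \<subseteq> L \<and> L \<subseteq> S \<and> connected_set E L}"
  have "finite ?F" using assms(1) by (simp add: finite_subset[of _ "Pow S"] subset_eq)
  moreover have "K \<in> ?F" using assms by blast
  ultimately obtain M where M: "M \<in> ?F" "\<forall>L\<in>?F. M \<le> L \<longrightarrow> M = L"
    using finite_has_maximal[of ?F] by (metis (no_types, lifting) empty_iff)
  have "component_of E S M" unfolding component_of_def
  proof (intro conjI allI impI)
    show "M \<noteq> {}" using M(1) assms(3) by blast
    show "M \<subseteq> S" "connected_set E M" using M(1) by simp_all
    fix L assume "M \<subseteq> L \<and> L \<subseteq> S \<and> connected_set E L"
    then show "L = M" using M by auto
  qed
  moreover have "K \<subseteq> M" using M(1) by simp
  ultimately show thesis using that by blast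
qed

section \<open>Paths\<close>

lemma is_path_mono: "is_path E p x y \<Longrightarrow> E \<subseteq> E' \<Longrightarrow> is_path E' p x y"
  unfolding is_path_def by blast

lemma is_path_restrict:
  assumes "is_path E p x y" "set p \<subseteq> W"
  shows "is_path (E \<inter> (W \<times> W)) p x y"
proof -
  have "(p ! i, p ! Suc i) \<in> E \<inter> (W \<times> W)" if "Suc i < length p" for i
    using assms that nth_mem[of i p] nth_mem[of "Suc i" p] unfolding is_path_def by auto
  then show ?thesis using assms(1) unfolding is_path_def by blast
qed

lemma is_path_loop: "is_path E p x x \<Longrightarrow> p = [x]"
proof (cases p)
  case (Cons a q)
  moreover assume "is_path E p x x"
  ultimately have "a = x" "last (a # q) = x" "a \<notin> set q" by (auto simp: is_path_def)
  then show ?thesis using Cons by (cases "q = []") auto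
qed (simp add: is_path_def)

lemma is_path_snoc:
  assumes "B \<noteq> []"
  shows "is_path E (B @ [y]) a y \<longleftrightarrow> is_path E B a (last B) \<and> y \<notin> set B \<and> (last B, y) \<in> E"
proof -
  have "(\<forall>i. Suc i < length (B @ [y]) \<longrightarrow> ((B @ [y]) ! i, (B @ [y]) ! Suc i) \<in> E) \<longleftrightarrow>
     (\<forall>i. Suc i < length B \<longrightarrow> (B ! i, B ! Suc i) \<in> E) \<and> (last B, y) \<in> E"
    (is "?L \<longleftrightarrow> ?R")
  proof
    assume L: ?L
    have "(B ! i, B ! Suc i) \<in> E" if "Suc i < length B" for i
      using L[rule_format, of i] that by (simp add: nth_append)
    moreover have "(last B, y) \<in> E"
      using L[rule_format, of "length B - 1"] assms by (simp add: nth_append last_conv_nth)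
    ultimately show ?R by blast
  next
    assume R: ?R
    show ?L
    proof (intro allI impI)
      fix i assume i: "Suc i < length (B @ [y])"
      show "((B @ [y]) ! i, (B @ [y]) ! Suc i) \<in> E"
      proof (cases "Suc i < length B")
        case False
        then have "i = length B - 1" using i by simp
        then show ?thesis using R assms by (simp add: nth_append last_conv_nth)
      qed (use R in \<open>simp add: nth_append\<close>)
    qed
  qed
  then show ?thesis unfolding is_path_def using assms by auto
qed

text \<open>A path entering S has to pass v both on the way in and on the way out, contradicting
  distinctness.\<close>

lemma is_path_avoids_gated_set:
  assumes path: "is_path E p x y" and "x \<notin> S" "y \<notin> S"
    and gate_in: "\<And>u w. (u, w) \<in> E \<Longrightarrow> u \<notin> S \<Longrightarrow> w \<in> S \<Longrightarrow> u = v"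
    and gate_out: "\<And>u w. (w, u) \<in> E \<Longrightarrow> u \<notin> S \<Longrightarrow> w \<in> S \<Longrightarrow> u = v"
  shows "set p \<inter> S = {}"
proof (rule ccontr)
  assume "set p \<inter> S \<noteq> {}"
  then obtain k where k: "k < length p" "p ! k \<in> S" by (auto simp: in_set_conv_nth)
  let ?I = "{k. k < length p \<and> p ! k \<in> S}"
  have fin: "finite ?I" and ne: "?I \<noteq> {}" using k by auto
  define m where "m = Min ?I"
  define M where "M = Max ?I"
  have m: "m < length p" "p ! m \<in> S" and M: "M < length p" "p ! M \<in> S"
    using Min_in[OF fin ne] Max_in[OF fin ne] unfolding m_def M_def by auto
  have "m \<le> M" using Max_ge[OF fin] m unfolding M_def by blast
  have ends: "p ! 0 = x" "p ! (length p - 1) = y" and dist: "distinct p"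
    and adj: "\<And>i. Suc i < length p \<Longrightarrow> (p ! i, p ! Suc i) \<in> E"
    using path unfolding is_path_def by (auto simp: hd_conv_nth last_conv_nth)
  have "m \<noteq> 0" using m(2) ends(1) \<open>x \<notin> S\<close> by (cases m) auto
  have "Suc M < length p" using M ends \<open>y \<notin> S\<close> by (metis Suc_lessI diff_Suc_1)
  have "m - 1 \<notin> ?I"
  proof
    assume "m - 1 \<in> ?I"
    then have "m \<le> m - 1" using Min_le[OF fin] unfolding m_def by blast
    then show False using \<open>m \<noteq> 0\<close> by simp
  qed
  then have "p ! (m - 1) \<notin> S" using m(1) by auto
  then have enter: "p ! (m - 1) = v"
    using gate_in adj[of "m - 1"] \<open>m \<noteq> 0\<close> m by simp
  have "Suc M \<notin> ?I"
  proof
    assume "Suc M \<in> ?I"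
    then have "Suc M \<le> M" using Max_ge[OF fin] unfolding M_def by blast
    then show False by simp
  qed
  then have "p ! Suc M \<notin> S" using \<open>Suc M < length p\<close> by auto
  then have leave: "p ! Suc M = v"
    using gate_out adj[OF \<open>Suc M < length p\<close>] M by blast
  have "m - 1 = Suc M"
    using enter leave nth_eq_iff_index_eq[OF dist] m(1) \<open>Suc M < length p\<close> by fastforce
  then show False using \<open>m \<le> M\<close> by simp
qed

section \<open>Rooted trees\<close>

definition root_path :: "'a rtree \<Rightarrow> 'a \<Rightarrow> 'a list" where
  "root_path T x = (THE p. is_path (edges T) p (root T) x)"

abbreviation depth :: "'a rtree \<Rightarrow> 'a \<Rightarrow> nat" where
  "depth T x \<equiv> length (root_path T x)"

text \<open>The parent of the root is the unspecified value last [].\<close>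

definition parent :: "'a rtree \<Rightarrow> 'a \<Rightarrow> 'a" where
  "parent T x = last (butlast (root_path T x))"

definition subtree :: "'a rtree \<Rightarrow> 'a \<Rightarrow> 'a set" where
  "subtree T x = {a \<in> verts T. x \<in> set (root_path T a)}"

locale rtree =
  fixes T :: "'a rtree"
  assumes rooted: "rooted_tree T"
begin

lemma finite_verts: "finite (verts T)"
  and root_in_verts: "root T \<in> verts T"
  and unique_path: "\<And>x y. x \<in> verts T \<Longrightarrow> y \<in> verts T \<Longrightarrow> x \<noteq> y \<Longrightarrow> \<exists>!p. is_path (edges T) p x y"
  and graph: "is_graph (verts T) (edges T)"
  using rooted unfolding rooted_tree_def is_tree_def by auto

lemma edge_in_verts: "(a, b) \<in> edges T \<Longrightarrow> a \<in> verts T \<and> b \<in> verts T"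
  and edge_refl: "a \<in> verts T \<Longrightarrow> (a, a) \<in> edges T"
  and edge_sym: "(a, b) \<in> edges T \<Longrightarrow> (b, a) \<in> edges T"
  using graph unfolding is_graph_def by auto

lemma path_in_verts:
  assumes "is_path (edges T) p x y" "x \<in> verts T"
  shows "set p \<subseteq> verts T"
proof
  fix z assume "z \<in> set p"
  then obtain i where i: "i < length p" "p ! i = z" by (auto simp: in_set_conv_nth)
  show "z \<in> verts T"
  proof (cases i)
    case 0 with assms i show ?thesis by (auto simp: is_path_def hd_conv_nth)
  next
    case (Suc j) with assms i have "(p ! j, p ! i) \<in> edges T" by (auto simp: is_path_def)
    then show ?thesis using edge_in_verts i by auto
  qed
qed

lemma ex1_root_path: "x \<in> verts T \<Longrightarrow> \<exists>!p. is_path (edges T) p (root T) x"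
proof (cases "x = root T")
  case True
  show ?thesis
  proof (rule ex1I[of _ "[root T]"])
    show "is_path (edges T) [root T] (root T) x" using True by (simp add: is_path_def)
    fix p assume "is_path (edges T) p (root T) x"
    then show "p = [root T]" using is_path_loop True by simp
  qed
qed (use unique_path root_in_verts in blast)

lemma root_path_is_path: "x \<in> verts T \<Longrightarrow> is_path (edges T) (root_path T x) (root T) x"
  unfolding root_path_def by (rule theI', rule ex1_root_path)

lemma root_path_unique: "x \<in> verts T \<Longrightarrow> is_path (edges T) p (root T) x \<Longrightarrow> root_path T x = p"
  unfolding root_path_def by (rule the1_equality[OF ex1_root_path])

lemma root_path_root: "root_path T (root T) = [root T]"
  by (rule is_path_loop[OF root_path_is_path[OF root_in_verts]])

lemma root_path_props:
  assumes "x \<in> verts T"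
  shows "root_path T x \<noteq> []" "last (root_path T x) = x" "set (root_path T x) \<subseteq> verts T"
    "x \<in> set (root_path T x)"
proof -
  have P: "is_path (edges T) (root_path T x) (root T) x" using root_path_is_path assms .
  then show ne: "root_path T x \<noteq> []" and l: "last (root_path T x) = x" by (auto simp: is_path_def)
  show "set (root_path T x) \<subseteq> verts T" using path_in_verts[OF P root_in_verts] .
  show "x \<in> set (root_path T x)" using last_in_set[OF ne] l by simp
qed

lemma ancestor_in_verts: "x \<in> verts T \<Longrightarrow> y \<in> set (root_path T x) \<Longrightarrow> y \<in> verts T"
  using root_path_props(3) by blast

lemma parent_props:
  assumes "x \<in> verts T" "x \<noteq> root T"
  shows "parent T x \<in> verts T" "root_path T x = root_path T (parent T x) @ [x]"
    "(parent T x, x) \<in> edges T" "(x, parent T x) \<in> edges T" "parent T x \<noteq> x"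
    "x \<notin> set (root_path T (parent T x))"
proof -
  let ?P = "root_path T x" let ?B = "butlast ?P"
  have P: "is_path (edges T) ?P (root T) x" using root_path_is_path assms(1) .
  then have eq: "?P = ?B @ [x]" by (metis append_butlast_last_id is_path_def)
  have "?B \<noteq> []" using eq P assms(2) unfolding is_path_def by (metis append_Nil list.sel(1))
  have PB: "is_path (edges T) ?B (root T) (last ?B)" "x \<notin> set ?B" "(last ?B, x) \<in> edges T"
    using is_path_snoc[OF \<open>?B \<noteq> []\<close>] P eq by (metis)+
  have "last ?B \<in> verts T"
    using path_in_verts[OF PB(1) root_in_verts] last_in_set[OF \<open>?B \<noteq> []\<close>] by blast
  then show pV: "parent T x \<in> verts T" unfolding parent_def .
  have "root_path T (parent T x) = ?B" using root_path_unique[OF pV] PB(1) unfolding parent_def by simp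
  then show "root_path T x = root_path T (parent T x) @ [x]" "x \<notin> set (root_path T (parent T x))"
    using eq PB(2) by simp_all
  show "(parent T x, x) \<in> edges T" using PB(3) unfolding parent_def .
  then show "(x, parent T x) \<in> edges T" by (rule edge_sym)
  show "parent T x \<noteq> x" using PB(2) last_in_set[OF \<open>?B \<noteq> []\<close>] unfolding parent_def by auto
qed

lemma depth_parent: "x \<in> verts T \<Longrightarrow> x \<noteq> root T \<Longrightarrow> depth T (parent T x) < depth T x"
  using parent_props(2) by simp

lemma parent_ancestor: "x \<in> verts T \<Longrightarrow> x \<noteq> root T \<Longrightarrow> parent T x \<in> set (root_path T x)"
  using parent_props(1,2) root_path_props(4) by simp

lemma depth_eq_1_iff: "x \<in> verts T \<Longrightarrow> depth T x = 1 \<longleftrightarrow> x = root T"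
  using parent_props(1,2) root_path_props(1) root_path_root by fastforce

lemma root_path_prefix:
  "x \<in> verts T \<Longrightarrow> y \<in> set (root_path T x) \<Longrightarrow> \<exists>s. root_path T x = root_path T y @ s"
proof (induction x rule: measure_induct_rule[where f = "depth T"])
  case (less x)
  show ?case
  proof (cases "y = x")
    case False
    then have "x \<noteq> root T" using less.prems root_path_root by auto
    with less.prems have "parent T x \<in> verts T" "root_path T x = root_path T (parent T x) @ [x]"
      using parent_props by auto
    with less False show ?thesis by force
  qed auto
qed

lemma ancestor_trans:
  "x \<in> verts T \<Longrightarrow> z \<in> set (root_path T x) \<Longrightarrow> y \<in> set (root_path T z) \<Longrightarrow> y \<in> set (root_path T x)"
  using root_path_prefix by fastforce

lemma ancestor_eq_if_depth_eq:
  assumes "x \<in> verts T" "y \<in> set (root_path T x)" "z \<in> set (root_path T x)" "depth T y = depth T z"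
  shows "y = z"
proof -
  obtain s t where "root_path T x = root_path T y @ s" "root_path T x = root_path T z @ t"
    using root_path_prefix assms by metis
  then have "root_path T y = root_path T z" using assms(4) by (metis append_eq_append_conv)
  then show ?thesis using root_path_props(2) ancestor_in_verts assms by metis
qed

lemma ancestors_linear:
  assumes "x \<in> verts T" "y \<in> set (root_path T x)" "z \<in> set (root_path T x)"
  shows "y \<in> set (root_path T z) \<or> z \<in> set (root_path T y)"
proof -
  obtain s t where "root_path T y @ s = root_path T z @ t" using root_path_prefix assms by metis
  then obtain us where "root_path T y = root_path T z @ us \<or> root_path T y @ us = root_path T z"
    by (auto simp: append_eq_append_conv2)
  then show ?thesis using root_path_props(4) ancestor_in_verts assms by (metis Un_iff set_append)
qed

lemma ancestor_antisym:
  assumes "y \<in> verts T" "z \<in> verts T" "y \<in> set (root_path T z)" "z \<in> set (root_path T y)"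
  shows "y = z"
proof -
  obtain s t where "root_path T z = root_path T y @ s" "root_path T y = root_path T z @ t"
    using root_path_prefix assms by metis
  then have "root_path T y = root_path T z" by simp
  then show ?thesis using root_path_props(2) assms by metis
qed

lemma depth_less_if_ancestor:
  assumes "x \<in> verts T" "y \<in> set (root_path T x)" "y \<noteq> x"
  shows "depth T y < depth T x"
proof -
  obtain s where s: "root_path T x = root_path T y @ s" using root_path_prefix assms by metis
  moreover have "s \<noteq> []"
    using s root_path_props(2) assms ancestor_in_verts[OF assms(1,2)] by (metis append_Nil2)
  ultimately show ?thesis by simp
qed

lemma tree_le_iff: "x \<in> verts T \<Longrightarrow> tree_le T y x \<longleftrightarrow> y \<in> set (root_path T x)"
  unfolding tree_le_def using root_path_is_path root_path_unique by blast

lemma edge_to_non_ancestor: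
  assumes "(a, b) \<in> edges T" "b \<notin> set (root_path T a)"
  shows "b \<noteq> root T \<and> parent T b = a"
proof -
  have aV: "a \<in> verts T" and bV: "b \<in> verts T" using edge_in_verts assms(1) by auto
  have "is_path (edges T) (root_path T a @ [b]) (root T) b"
    using is_path_snoc[OF root_path_props(1)[OF aV]] root_path_props(2)[OF aV] root_path_is_path[OF aV]
      assms by simp
  then have eq: "root_path T b = root_path T a @ [b]" using root_path_unique bV by blast
  then have "b \<noteq> root T" using root_path_root root_path_props(1)[OF aV] by auto
  moreover have "parent T b = a" using eq root_path_props(2)[OF aV] unfolding parent_def by simp
  ultimately show ?thesis by simp
qed

lemma edge_parent_cases:
  assumes "(a, b) \<in> edges T" "a \<noteq> b"
  shows "(b \<noteq> root T \<and> parent T b = a) \<or> (a \<noteq> root T \<and> parent T a = b)"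
proof (cases "b \<in> set (root_path T a)")
  case True
  have "a \<notin> set (root_path T b)"
    using ancestor_antisym edge_in_verts[OF assms(1)] True assms(2) by blast
  then show ?thesis using edge_to_non_ancestor[OF edge_sym[OF assms(1)]] by blast
qed (use edge_to_non_ancestor assms in blast)

lemma subtree_iff_parent:
  "a \<in> verts T \<Longrightarrow> a \<noteq> root T \<Longrightarrow> a \<in> subtree T x \<longleftrightarrow> a = x \<or> parent T a \<in> subtree T x"
  using parent_props unfolding subtree_def by auto

lemma subtree_self: "x \<in> verts T \<Longrightarrow> x \<in> subtree T x"
  unfolding subtree_def using root_path_props(4) by blast

lemma subtree_subset: "subtree T x \<subseteq> verts T"
  unfolding subtree_def by blast

lemma root_in_subtreeD: "root T \<in> subtree T x \<Longrightarrow> x = root T"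
  unfolding subtree_def using root_path_root by auto

lemma subtree_component:
  assumes "c \<in> verts T" "c \<noteq> root T"
  shows "component_of (edges T) (verts T - {parent T c}) (subtree T c)"
proof (rule component_ofI)
  show "subtree T c \<noteq> {}" using subtree_self assms by blast
  have "parent T c \<notin> subtree T c" using parent_props(6)[OF assms] unfolding subtree_def by blast
  then show "subtree T c \<subseteq> verts T - {parent T c}" using subtree_subset by blast
  show "connected_set (edges T) (subtree T c)"
  proof (rule connected_set_by_descent[where x = c and q = "parent T" and \<mu> = "depth T"])
    show "c \<in> subtree T c" using subtree_self assms by blast
    fix a assume a: "a \<in> subtree T c" "a \<noteq> c"
    then have "a \<in> verts T" "a \<noteq> root T" using subtree_subset root_in_subtreeD by blast+
    then show "parent T a \<in> subtree T c \<and> (parent T a, a) \<in> edges T \<and> (a, parent T a) \<in> edges T \<and>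
      depth T (parent T a) < depth T a"
      using subtree_iff_parent a parent_props depth_parent by auto
  qed
  fix a b assume a: "a \<in> subtree T c" and b: "b \<in> verts T - {parent T c} - subtree T c"
  show "(a, b) \<notin> edges T"
  proof
    assume ab: "(a, b) \<in> edges T"
    have "a \<noteq> b" using a b by blast
    from edge_parent_cases[OF ab this] show False
    proof
      assume "b \<noteq> root T \<and> parent T b = a"
      then show False using subtree_iff_parent[of b c] a b by auto
    next
      assume "a \<noteq> root T \<and> parent T a = b"
      then show False using subtree_iff_parent[of a c] a b subtree_subset by auto
    qed
  qed
qed

end

section \<open>Light epimorphisms\<close>

locale light_epi = G: rtree G + H: rtree H
  for G :: "'a rtree" and H :: "'b rtree" +
  fixes f :: "'a \<Rightarrow> 'b"
  assumes epi: "epimorphism f G H" and light: "light f G"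
begin

lemma f_verts: "x \<in> verts G \<Longrightarrow> f x \<in> verts H"
  using epi unfolding epimorphism_def by blast

lemma f_edge: "(a, b) \<in> edges G \<Longrightarrow> (f a, f b) \<in> edges H"
  using epi unfolding epimorphism_def by force

lemma f_root: "f (root G) = root H"
  using epi unfolding epimorphism_def by blast

lemma f_ancestor:
  assumes "x \<in> verts G" "y \<in> set (root_path G x)"
  shows "f y \<in> set (root_path H (f x))"
proof -
  have "tree_le G y x" using G.tree_le_iff assms by blast
  then have "tree_le H (f y) (f x)"
    using epi assms G.ancestor_in_verts unfolding epimorphism_def by blast
  then show ?thesis using H.tree_le_iff f_verts[OF assms(1)] by blast
qed

lemma light_edge: "(a, b) \<in> edges G \<Longrightarrow> a \<noteq> b \<Longrightarrow> f a \<noteq> f b"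
  using light G.edge_in_verts unfolding light_def by blast

text \<open>Lightness forbids collapsing the edge to the parent, and preservation of the order
  forbids mapping it downwards.\<close>

lemma f_parent:
  assumes x: "x \<in> verts G" "x \<noteq> root G"
  shows "f x \<noteq> root H" "f (parent G x) = parent H (f x)"
proof -
  let ?a = "parent G x"
  have aV: "?a \<in> verts G" and e: "(x, ?a) \<in> edges G" and ne: "?a \<noteq> x"
    using G.parent_props[OF x] by auto
  have fne: "f x \<noteq> f ?a" using light_edge e ne by metis
  have fa_anc: "f ?a \<in> set (root_path H (f x))" using f_ancestor[OF x(1) G.parent_ancestor[OF x]] .
  from H.edge_parent_cases[OF f_edge[OF e] fne]
  have "f x \<noteq> root H \<and> parent H (f x) = f ?a"
  proof
    assume "f ?a \<noteq> root H \<and> parent H (f ?a) = f x"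
    then have "f x \<in> set (root_path H (f ?a))" using H.parent_ancestor[OF f_verts[OF aV]] by metis
    then show ?thesis using H.ancestor_antisym f_verts x(1) aV fa_anc fne by metis
  qed
  then show "f x \<noteq> root H" "f (parent G x) = parent H (f x)" by simp_all
qed

lemma f_depth: "x \<in> verts G \<Longrightarrow> depth H (f x) = depth G x"
proof (induction x rule: measure_induct_rule[where f = "depth G"])
  case (less x)
  show ?case
  proof (cases "x = root G")
    case True then show ?thesis using f_root G.root_path_root H.root_path_root by simp
  next
    case False
    with less have "depth H (f (parent G x)) = depth G (parent G x)"
      using G.depth_parent G.parent_props(1) by blast
    then show ?thesis
      using G.parent_props(2)[OF less.prems False] H.parent_props(2)[OF f_verts[OF less.prems]]
        f_parent[OF less.prems False] by simp
  qed
qed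

lemma image_subtree_subset: "x \<in> verts G \<Longrightarrow> f ` subtree G x \<subseteq> subtree H (f x)"
  unfolding subtree_def using f_ancestor f_verts by blast

definition collapsed_siblings :: "'a \<Rightarrow> 'a \<Rightarrow> bool" where
  "collapsed_siblings a b \<longleftrightarrow> a \<in> verts G \<and> b \<in> verts G \<and> a \<noteq> b \<and> a \<noteq> root G \<and> b \<noteq> root G \<and>
     parent G a = parent G b \<and> f a = f b"

lemma collapsed_siblings_sym: "collapsed_siblings a b \<Longrightarrow> collapsed_siblings b a"
  unfolding collapsed_siblings_def by auto

lemma collapsed_siblings_depth: "collapsed_siblings a b \<Longrightarrow> depth G a = depth G b"
  unfolding collapsed_siblings_def using G.parent_props(2) by (metis length_append_singleton)

lemma collapsed_siblings_above:
  "a \<in> verts G \<Longrightarrow> b \<in> verts G \<Longrightarrow> a \<noteq> b \<Longrightarrow> f a = f b \<Longrightarrow>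
   \<exists>a' b'. collapsed_siblings a' b' \<and> a' \<in> set (root_path G a) \<and> b' \<in> set (root_path G b)"
proof (induction a arbitrary: b rule: measure_induct_rule[where f = "depth G"])
  case (less a)
  have "depth G a = depth G b" using f_depth less.prems by metis
  then have not_root: "a \<noteq> root G" "b \<noteq> root G" using G.depth_eq_1_iff less.prems by metis+
  show ?case
  proof (cases "parent G a = parent G b")
    case True
    then have "collapsed_siblings a b" unfolding collapsed_siblings_def using less.prems not_root by simp
    then show ?thesis using G.root_path_props(4) less.prems by blast
  next
    case False
    have "f (parent G a) = f (parent G b)" using f_parent not_root less.prems by metis
    then obtain a' b' where "collapsed_siblings a' b'"
      "a' \<in> set (root_path G (parent G a))" "b' \<in> set (root_path G (parent G b))"
      using less.IH G.depth_parent G.parent_props(1) less.prems not_root False by meson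
    then show ?thesis using G.ancestor_trans G.parent_ancestor less.prems not_root by blast
  qed
qed

lemma inj_on_subtree_if_deepest:
  assumes x: "collapsed_siblings x y"
    and deepest: "\<And>a b. collapsed_siblings a b \<Longrightarrow> depth G a \<le> depth G x"
  shows "inj_on f (subtree G x)"
proof (rule inj_onI)
  fix a b assume a: "a \<in> subtree G x" and b: "b \<in> subtree G x" and fab: "f a = f b"
  have xV: "x \<in> verts G" using x unfolding collapsed_siblings_def by simp
  have below_x: "z \<in> set (root_path G x)"
    if "c \<in> subtree G x" "z \<in> set (root_path G c)" "depth G z \<le> depth G x" for z c
  proof -
    have "c \<in> verts G" "x \<in> set (root_path G c)" using that(1) unfolding subtree_def by auto
    then have "z \<in> set (root_path G x) \<or> x \<in> set (root_path G z)"
      using G.ancestors_linear that(2) by blast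
    moreover have "x \<in> set (root_path G z) \<Longrightarrow> z = x"
      using G.depth_less_if_ancestor G.ancestor_in_verts \<open>c \<in> verts G\<close> that(2,3) by fastforce
    ultimately show ?thesis using G.root_path_props(4)[OF xV] by blast
  qed
  show "a = b"
  proof (rule ccontr)
    assume "a \<noteq> b"
    then obtain a' b' where ab: "collapsed_siblings a' b'" "a' \<in> set (root_path G a)"
      "b' \<in> set (root_path G b)"
      using collapsed_siblings_above a b fab G.subtree_subset by blast
    then have "depth G a' \<le> depth G x" "depth G b' \<le> depth G x"
      using deepest collapsed_siblings_depth by (metis)+
    then have "a' \<in> set (root_path G x)" "b' \<in> set (root_path G x)"
      using below_x a b ab by blast+
    then have "a' = b'" using G.ancestor_eq_if_depth_eq[OF xV] collapsed_siblings_depth ab(1) by blast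
    then show False using ab(1) unfolding collapsed_siblings_def by simp
  qed
qed

lemma obtain_collapsed_siblings_inj:
  assumes "\<not> inj_on f (verts G)"
  obtains x y where "collapsed_siblings x y" "inj_on f (subtree G x)" "inj_on f (subtree G y)"
proof -
  let ?C = "{(a, b). collapsed_siblings a b}"
  have "?C \<subseteq> verts G \<times> verts G" unfolding collapsed_siblings_def by auto
  then have fin: "finite ?C" using finite_subset G.finite_verts by blast
  have "?C \<noteq> {}" using assms collapsed_siblings_above unfolding inj_on_def by blast
  let ?m = "Max ((\<lambda>(a, b). depth G a) ` ?C)"
  have "?m \<in> (\<lambda>(a, b). depth G a) ` ?C"
    using Max_in[OF finite_imageI[OF fin]] \<open>?C \<noteq> {}\<close> by blast
  then obtain x y where xy: "collapsed_siblings x y" "depth G x = ?m" by auto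
  have deepest: "depth G a \<le> depth G x" if "collapsed_siblings a b" for a b
  proof -
    have "depth G a \<in> (\<lambda>(a, b). depth G a) ` ?C" using that by force
    from Max_ge[OF finite_imageI[OF fin] this] show ?thesis using xy(2) by simp
  qed
  have "depth G a \<le> depth G y" if "collapsed_siblings a b" for a b
    using deepest[OF that] collapsed_siblings_depth[OF xy(1)] by simp
  then show thesis
    using that xy(1) inj_on_subtree_if_deepest deepest collapsed_siblings_sym by blast
qed

lemma parent_reflect:
  assumes inj: "inj_on f (subtree G x)" and c: "c \<in> subtree G x" and d: "d \<in> subtree G x"
    and fd: "f d \<noteq> root H" "parent H (f d) = f c"
  shows "d \<noteq> root G \<and> parent G d = c"
proof -
  have cV: "c \<in> verts G" and dV: "d \<in> verts G" using c d G.subtree_subset by auto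
  have xV: "x \<in> verts G" using c G.ancestor_in_verts unfolding subtree_def by blast
  have "d \<noteq> x"
  proof
    assume "d = x"
    have "f x \<in> set (root_path H (f c))" using image_subtree_subset[OF xV] c unfolding subtree_def by blast
    moreover have "f c \<in> set (root_path H (f x))"
      using H.parent_ancestor[OF f_verts[OF dV] fd(1)] fd(2) \<open>d = x\<close> by simp
    ultimately have "f c = f d" using H.ancestor_antisym f_verts cV xV \<open>d = x\<close> by blast
    then show False using H.parent_props(5)[OF f_verts[OF dV] fd(1)] fd(2) by simp
  qed
  moreover have "d \<noteq> root G" using G.root_in_subtreeD d \<open>d \<noteq> x\<close> by blast
  ultimately have "parent G d \<in> subtree G x" using G.subtree_iff_parent[OF dV] d by blast
  moreover have "f (parent G d) = f c" using f_parent[OF dV \<open>d \<noteq> root G\<close>] fd(2) by simp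
  ultimately show ?thesis using inj c \<open>d \<noteq> root G\<close> unfolding inj_on_def by blast
qed

lemma edge_reflect:
  assumes inj: "inj_on f (subtree G x)" and c: "c \<in> subtree G x" and d: "d \<in> subtree G x"
    and e: "(f c, f d) \<in> edges H"
  shows "(c, d) \<in> edges G"
proof (cases "f c = f d")
  case True
  then show ?thesis using inj c d G.edge_refl G.subtree_subset unfolding inj_on_def by blast
next
  case False
  from H.edge_parent_cases[OF e False] show ?thesis
  proof
    assume "f d \<noteq> root H \<and> parent H (f d) = f c"
    then show ?thesis using parent_reflect[OF inj c d] G.parent_props(3) d G.subtree_subset by blast
  next
    assume "f c \<noteq> root H \<and> parent H (f c) = f d"
    then show ?thesis using parent_reflect[OF inj d c] G.parent_props(4) c G.subtree_subset by blast
  qed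
qed

lemma ancestor_reflect:
  assumes inj: "inj_on f (subtree G x)" and c: "c \<in> subtree G x"
  shows "d \<in> subtree G x \<Longrightarrow> f c \<in> set (root_path H (f d)) \<Longrightarrow> c \<in> set (root_path G d)"
proof (induction d rule: measure_induct_rule[where f = "depth G"])
  case (less d)
  have cV: "c \<in> verts G" and dV: "d \<in> verts G" using c less.prems(1) G.subtree_subset by auto
  have xV: "x \<in> verts G" using c G.ancestor_in_verts unfolding subtree_def by blast
  show ?case
  proof (cases "f c = f d")
    case True
    then show ?thesis using inj c less.prems(1) G.root_path_props(4)[OF dV] unfolding inj_on_def by metis
  next
    case False
    have "d \<noteq> x"
    proof
      assume "d = x"
      have "f x \<in> set (root_path H (f c))"
        using image_subtree_subset[OF xV] c unfolding subtree_def by blast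
      then show False using H.ancestor_antisym f_verts cV xV less.prems(2) False \<open>d = x\<close> by blast
    qed
    moreover have "d \<noteq> root G" using G.root_in_subtreeD less.prems(1) \<open>d \<noteq> x\<close> by blast
    ultimately have pd: "parent G d \<in> subtree G x" using G.subtree_iff_parent[OF dV] less.prems(1) by blast
    have "f c \<in> set (root_path H (f (parent G d)))"
      using H.parent_props(2)[OF f_verts[OF dV]] f_parent[OF dV \<open>d \<noteq> root G\<close>] less.prems(2) False
      by simp
    then have "c \<in> set (root_path G (parent G d))"
      using less.IH G.depth_parent[OF dV \<open>d \<noteq> root G\<close>] pd by blast
    then show ?thesis using G.ancestor_trans[OF dV G.parent_ancestor[OF dV \<open>d \<noteq> root G\<close>]] by blast
  qed
qed

end

section \<open>Confluence lifts subtrees\<close>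

locale light_confluent_epi = light_epi +
  assumes confluent: "confluent f G H"
begin

lemma confluentD:
  "Q \<subseteq> verts H \<Longrightarrow> connected_set (edges H) Q \<Longrightarrow> component_of (edges G) (verts G \<inter> f -` Q) K \<Longrightarrow>
   f ` K = Q"
  using confluent unfolding confluent_def by blast

text \<open>The component of x in the preimage of the edge from f x to a child c' must reach a vertex
  over c'; lightness and the order rule out everything but a child of x.\<close>

lemma child_lift:
  assumes x: "x \<in> verts G" and c': "c' \<in> verts H" "c' \<noteq> root H" "parent H c' = f x"
  obtains c where "c \<in> verts G" "c \<noteq> root G" "parent G c = x" "f c = c'"
proof -
  let ?Q = "{f x, c'}"
  have "(f x, c') \<in> edges H" "(c', f x) \<in> edges H" using H.parent_props[OF c'(1,2)] c'(3) by auto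
  then have Qc: "connected_set (edges H) ?Q" by (rule connected_set_pair)
  have QV: "?Q \<subseteq> verts H" using f_verts[OF x] c'(1) by blast
  have "finite (verts G \<inter> f -` ?Q)" "{x} \<subseteq> verts G \<inter> f -` ?Q" using G.finite_verts x by auto
  then obtain K where "{x} \<subseteq> K" and K: "component_of (edges G) (verts G \<inter> f -` ?Q) K"
    by (rule component_of_exists[OF _ _ insert_not_empty connected_set_singleton])
  have fK: "f ` K = ?Q" using confluentD[OF QV Qc K] .
  have KS: "K \<subseteq> verts G \<inter> f -` ?Q" and Kc: "connected_set (edges G) K"
    using K unfolding component_of_def by auto
  have "c' \<noteq> f x" using H.parent_props(5)[OF c'(1,2)] c'(3) by simp
  then have "K - {x} \<noteq> {}" using fK by force
  then obtain b where b: "b \<in> K" "b \<noteq> x" "(x, b) \<in> edges G"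
    using connected_setD[OF Kc, of "{x}" "K - {x}"] \<open>{x} \<subseteq> K\<close> by blast
  have bV: "b \<in> verts G" using KS b(1) by blast
  have "f x \<noteq> f b" using light_edge b(2,3) by metis
  moreover have "f b \<in> ?Q" using KS b(1) by blast
  ultimately have fb: "f b = c'" by simp
  have "x \<noteq> b" using b(2) by simp
  from G.edge_parent_cases[OF b(3) this] show thesis
  proof
    assume "b \<noteq> root G \<and> parent G b = x"
    then show thesis using that bV fb by blast
  next
    assume xb: "x \<noteq> root G \<and> parent G x = b"
    then have "f x \<noteq> root H" "parent H (f x) = c'" using f_parent[OF x] fb by auto
    then have "c' \<in> set (root_path H (f x))" using H.parent_ancestor[OF f_verts[OF x]] by blast
    moreover have "f x \<in> set (root_path H c')" using H.parent_ancestor[OF c'(1,2)] c'(3) by simp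
    ultimately show thesis using H.ancestor_antisym c'(1) f_verts[OF x] \<open>c' \<noteq> f x\<close> by blast
  qed
qed

lemma image_subtree:
  assumes x: "x \<in> verts G"
  shows "f ` subtree G x = subtree H (f x)"
proof
  show "f ` subtree G x \<subseteq> subtree H (f x)" using x by (rule image_subtree_subset)
  have "b \<in> subtree H (f x) \<Longrightarrow> b \<in> f ` subtree G x" for b
  proof (induction b rule: measure_induct_rule[where f = "depth H"])
    case (less b)
    have bV: "b \<in> verts H" using less.prems H.subtree_subset by blast
    show ?case
    proof (cases "b = f x")
      case True
      then show ?thesis using G.subtree_self[OF x] by (rule rev_image_eqI[rotated])
    next
      case False
      then have "b \<noteq> root H" using H.root_in_subtreeD less.prems by metis
      then have "parent H b \<in> subtree H (f x)" using H.subtree_iff_parent[OF bV] less.prems False by blast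
      then have "parent H b \<in> f ` subtree G x" using less.IH H.depth_parent[OF bV \<open>b \<noteq> root H\<close>] by blast
      then obtain a where a: "a \<in> subtree G x" "f a = parent H b" by (metis imageE)
      then have "a \<in> verts G" using G.subtree_subset by blast
      then obtain c where "c \<in> verts G" "c \<noteq> root G" "parent G c = a" "f c = b"
        using child_lift bV \<open>b \<noteq> root H\<close> a(2) by metis
      then show ?thesis using G.subtree_iff_parent a(1) by blast
    qed
  qed
  then show "subtree H (f x) \<subseteq> f ` subtree G x" by blast
qed

end

section \<open>Retractions onto subtrees\<close>

definition graph_retraction :: "('a \<Rightarrow> 'a) \<Rightarrow> 'a rtree \<Rightarrow> 'a rtree \<Rightarrow> bool" where
  "graph_retraction r G T \<longleftrightarrow> verts T \<subseteq> verts G \<and> edges T \<subseteq> edges G \<and>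
     (\<forall>z\<in>verts T. r z = z) \<and> r ` verts G \<subseteq> verts T \<and>
     (\<forall>a b. (a, b) \<in> edges G \<longrightarrow> (r a, r b) \<in> edges T)"

lemma epimorphism_retract:
  assumes epi: "epimorphism f G H" and "rooted_tree T" "root T = root G"
    and r: "graph_retraction r G T" and fr: "\<And>z. z \<in> verts G \<Longrightarrow> f (r z) = f z"
  shows "epimorphism f T H"
  unfolding epimorphism_def
proof (intro conjI ballI impI)
  have sub: "verts T \<subseteq> verts G" "edges T \<subseteq> edges G" and into: "r ` verts G \<subseteq> verts T"
    and r_edge: "\<And>a b. (a, b) \<in> edges G \<Longrightarrow> (r a, r b) \<in> edges T"
    using r unfolding graph_retraction_def by blast+
  have fG: "f ` verts G = verts H" "(\<lambda>(a, b). (f a, f b)) ` edges G = edges H"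
    and G_edges: "edges G \<subseteq> verts G \<times> verts G"
    using epi unfolding epimorphism_def rooted_tree_def is_tree_def is_graph_def by blast+
  show "rooted_tree T" "rooted_tree H" "f (root T) = root H"
    using assms epi unfolding epimorphism_def by auto
  have "f ` verts G \<subseteq> f ` verts T"
  proof clarify
    fix z assume "z \<in> verts G"
    then show "f z \<in> f ` verts T" using fr into by (metis image_subset_iff rev_image_eqI)
  qed
  then show "f ` verts T = verts H" using fG(1) sub(1) by blast
  have "(\<lambda>(a, b). (f a, f b)) ` edges G \<subseteq> (\<lambda>(a, b). (f a, f b)) ` edges T"
  proof clarify
    fix a b assume ab: "(a, b) \<in> edges G"
    then have "(f a, f b) = (f (r a), f (r b))" using fr G_edges by auto
    then show "(f a, f b) \<in> (\<lambda>(a, b). (f a, f b)) ` edges T" using r_edge[OF ab] by force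
  qed
  then show "(\<lambda>(a, b). (f a, f b)) ` edges T = edges H" using fG(2) sub(2) by blast
  fix a b assume "a \<in> verts T" "b \<in> verts T" "tree_le T a b"
  moreover have "tree_le G a b"
    using \<open>tree_le T a b\<close> is_path_mono[OF _ sub(2)] \<open>root T = root G\<close> unfolding tree_le_def by metis
  ultimately show "tree_le H (f a) (f b)" using epi sub(1) unfolding epimorphism_def by blast
qed

lemma light_subgraph: "light f G \<Longrightarrow> verts T \<subseteq> verts G \<Longrightarrow> edges T \<subseteq> edges G \<Longrightarrow> light f T"
  unfolding light_def by blast

text \<open>A component K of a preimage in T lies in a component K' of the preimage in G; the retraction
  maps K' onto a connected superset of K inside the preimage, hence onto K.\<close>

lemma confluent_retract:
  assumes confl: "confluent f G H" and "finite (verts G)"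
    and r: "graph_retraction r G T" and fr: "\<And>z. z \<in> verts G \<Longrightarrow> f (r z) = f z"
  shows "confluent f T H"
  unfolding confluent_def
proof (intro allI impI)
  have sub: "verts T \<subseteq> verts G" "edges T \<subseteq> edges G" and fix_T: "\<And>z. z \<in> verts T \<Longrightarrow> r z = z"
    and into: "r ` verts G \<subseteq> verts T" and r_edge: "\<And>a b. (a, b) \<in> edges G \<Longrightarrow> (r a, r b) \<in> edges T"
    using r unfolding graph_retraction_def by blast+
  fix Q K assume Q: "Q \<subseteq> verts H \<and> connected_set (edges H) Q"
    and K: "component_of (edges T) (verts T \<inter> f -` Q) K"
  have KS: "K \<subseteq> verts T \<inter> f -` Q" and "K \<noteq> {}" and Kc: "connected_set (edges T) K"
    and Kmax: "\<And>L. K \<subseteq> L \<Longrightarrow> L \<subseteq> verts T \<inter> f -` Q \<Longrightarrow> connected_set (edges T) L \<Longrightarrow> L = K"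
    using K unfolding component_of_def by blast+
  have "connected_set (edges G) K" using connected_set_mono[OF Kc] sub(2) by blast
  moreover have "K \<subseteq> verts G \<inter> f -` Q" using KS sub(1) by blast
  ultimately obtain K' where K': "K \<subseteq> K'" "component_of (edges G) (verts G \<inter> f -` Q) K'"
    using component_of_exists \<open>finite (verts G)\<close> \<open>K \<noteq> {}\<close> by (metis finite_Int)
  have K'S: "K' \<subseteq> verts G \<inter> f -` Q" and K'c: "connected_set (edges G) K'"
    using K'(2) unfolding component_of_def by auto
  have "connected_set (edges T) (r ` K')" using connected_set_image[OF K'c] r_edge by blast
  moreover have "r ` K' \<subseteq> verts T \<inter> f -` Q" using K'S into fr by (auto simp: subset_eq)
  moreover have "K \<subseteq> r ` K'" using K'(1) KS fix_T by force
  ultimately have "r ` K' = K" using Kmax by blast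
  then have "f ` K = f ` r ` K'" by simp
  also have "\<dots> = f ` K'"
    unfolding image_image using fr K'S by (intro image_cong) auto
  also have "\<dots> = Q" using confl Q K'(2) unfolding confluent_def by blast
  finally show "f ` K = Q" .
qed

lemma retraction_epimorphism:
  assumes "rooted_tree G" "rooted_tree T" "root T = root G" and r: "graph_retraction r G T"
    and T_edges: "edges T \<subseteq> verts T \<times> verts T"
    and r_le: "\<And>a b. a \<in> verts G \<Longrightarrow> b \<in> verts G \<Longrightarrow> tree_le G a b \<Longrightarrow> tree_le T (r a) (r b)"
  shows "epimorphism r G T"
  unfolding epimorphism_def
proof (intro conjI ballI impI)
  have sub: "verts T \<subseteq> verts G" "edges T \<subseteq> edges G" and fix_T: "\<And>z. z \<in> verts T \<Longrightarrow> r z = z"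
    and into: "r ` verts G \<subseteq> verts T" and r_edge: "\<And>a b. (a, b) \<in> edges G \<Longrightarrow> (r a, r b) \<in> edges T"
    using r unfolding graph_retraction_def by blast+
  show "rooted_tree G" "rooted_tree T" by fact+
  have "verts T \<subseteq> r ` verts G"
  proof
    fix z assume "z \<in> verts T"
    then show "z \<in> r ` verts G" using fix_T[of z] sub(1) by (metis rev_image_eqI subsetD)
  qed
  then show "r ` verts G = verts T" using into by blast
  have "edges T \<subseteq> (\<lambda>(a, b). (r a, r b)) ` edges G"
  proof clarify
    fix a b assume ab: "(a, b) \<in> edges T"
    then have "a \<in> verts T" "b \<in> verts T" using T_edges by auto
    then have "(a, b) = (r a, r b)" using fix_T by simp
    then show "(a, b) \<in> (\<lambda>(a, b). (r a, r b)) ` edges G" using ab sub(2) by force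
  qed
  moreover have "(\<lambda>(a, b). (r a, r b)) ` edges G \<subseteq> edges T" using r_edge by auto
  ultimately show "(\<lambda>(a, b). (r a, r b)) ` edges G = edges T" by (rule equalityI[rotated])
  have "root T \<in> verts T" using \<open>rooted_tree T\<close> unfolding rooted_tree_def by blast
  then show "r (root G) = root T" using fix_T \<open>root T = root G\<close> by metis
qed (use r_le in blast)

section \<open>Folding a pair of collapsed siblings\<close>

locale sibling_fold = light_confluent_epi +
  fixes x1 x2 :: 'a
  assumes siblings: "collapsed_siblings x1 x2"
    and inj1: "inj_on f (subtree G x1)" and inj2: "inj_on f (subtree G x2)"
begin

definition v :: 'a where "v = parent G x1"

definition kept :: "'a set" where "kept = verts G - subtree G x2"

definition folded_tree :: "'a rtree" where
  "folded_tree = (kept, edges G \<inter> (kept \<times> kept), root G)"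

definition fold_map :: "'a \<Rightarrow> 'a" where
  "fold_map z = (if z \<in> subtree G x2 then inv_into (subtree G x1) f (f z) else z)"

lemma folded_tree_simps [simp]:
  "verts folded_tree = kept" "edges folded_tree = edges G \<inter> (kept \<times> kept)" "root folded_tree = root G"
  unfolding folded_tree_def verts_def edges_def root_def by simp_all

lemma siblings_props:
  "x1 \<in> verts G" "x2 \<in> verts G" "x1 \<noteq> x2" "x1 \<noteq> root G" "x2 \<noteq> root G"
  "parent G x1 = v" "parent G x2 = v" "f x1 = f x2"
  using siblings unfolding collapsed_siblings_def v_def by auto

lemma v_in_verts: "v \<in> verts G"
  using G.parent_props(1) siblings_props by metis

lemma root_path_siblings: "root_path G x1 = root_path G v @ [x1]" "root_path G x2 = root_path G v @ [x2]"
  using G.parent_props(2) siblings_props by metis+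

lemma subtrees_disjoint: "subtree G x1 \<inter> subtree G x2 = {}"
proof (intro equalityI subsetI)
  fix a assume "a \<in> subtree G x1 \<inter> subtree G x2"
  then have "a \<in> verts G" "x1 \<in> set (root_path G a)" "x2 \<in> set (root_path G a)"
    unfolding subtree_def by auto
  then have "x1 = x2" using G.ancestor_eq_if_depth_eq root_path_siblings by simp
  then show "a \<in> {}" using siblings_props(3) by simp
qed simp

lemma image_subtrees_eq: "f ` subtree G x1 = f ` subtree G x2"
  using image_subtree siblings_props by metis

lemma subtree1_kept: "subtree G x1 \<subseteq> kept"
  using subtrees_disjoint G.subtree_subset unfolding kept_def by blast

lemma kept_verts: "kept \<subseteq> verts G"
  unfolding kept_def by blast

lemma v_kept: "v \<in> kept"
proof -
  have "x2 \<notin> set (root_path G v)" using G.parent_props(6)[OF siblings_props(2,5)] siblings_props(7) by simp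
  then show ?thesis using v_in_verts unfolding kept_def subtree_def by blast
qed

lemma fold_map_kept: "z \<in> kept \<Longrightarrow> fold_map z = z"
  unfolding fold_map_def kept_def by simp

lemma fold_map_subtree2: "z \<in> subtree G x2 \<Longrightarrow> fold_map z \<in> subtree G x1 \<and> f (fold_map z) = f z"
  unfolding fold_map_def using image_subtrees_eq by (simp add: inv_into_into f_inv_into_f)

lemma f_fold_map: "z \<in> verts G \<Longrightarrow> f (fold_map z) = f z"
  using fold_map_subtree2 unfolding fold_map_def by auto

lemma fold_map_into_kept: "z \<in> verts G \<Longrightarrow> fold_map z \<in> kept"
  using fold_map_subtree2 subtree1_kept unfolding fold_map_def kept_def by auto

lemma fold_map_x2: "fold_map x2 = x1"
  using G.subtree_self siblings_props inv_into_f_f[OF inj1 G.subtree_self[OF siblings_props(1)]]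
  unfolding fold_map_def by simp

lemma image_fold_map_subtree2: "fold_map ` subtree G x2 = subtree G x1"
proof
  show "fold_map ` subtree G x2 \<subseteq> subtree G x1" using fold_map_subtree2 by blast
  show "subtree G x1 \<subseteq> fold_map ` subtree G x2"
  proof
    fix c assume c: "c \<in> subtree G x1"
    then obtain z where z: "z \<in> subtree G x2" "f z = f c" using image_subtrees_eq by (metis imageE imageI)
    then have "fold_map z = c" using c inj1 unfolding fold_map_def by (metis inv_into_f_f)
    then show "c \<in> fold_map ` subtree G x2" using z(1) by blast
  qed
qed

lemma boundary_edge:
  assumes "(u, w) \<in> edges G" "u \<notin> subtree G x2" "w \<in> subtree G x2"
  shows "u = v \<and> w = x2"
proof -
  have uV: "u \<in> verts G" and wV: "w \<in> verts G" using G.edge_in_verts assms(1) by auto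
  have "u \<noteq> w" using assms by blast
  from G.edge_parent_cases[OF assms(1) this] show ?thesis
  proof
    assume "w \<noteq> root G \<and> parent G w = u"
    then show ?thesis using G.subtree_iff_parent[OF wV] assms siblings_props by metis
  next
    assume "u \<noteq> root G \<and> parent G u = w"
    then show ?thesis using G.subtree_iff_parent[OF uV] assms by blast
  qed
qed

lemma kept_ancestor_closed: "b \<in> kept \<Longrightarrow> a \<in> set (root_path G b) \<Longrightarrow> a \<in> kept"
  using G.ancestor_trans G.ancestor_in_verts unfolding kept_def subtree_def by blast

lemma path_in_kept:
  assumes "is_path (edges G) p x y" "x \<in> kept" "y \<in> kept"
  shows "set p \<subseteq> kept"
proof -
  have "set p \<inter> subtree G x2 = {}"
    using assms unfolding kept_def
    by (intro is_path_avoids_gated_set[where v = v]) (auto dest: boundary_edge G.edge_sym)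
  then show ?thesis using G.path_in_verts assms kept_verts unfolding kept_def by blast
qed

lemma folded_tree_rooted: "rooted_tree folded_tree"
  unfolding rooted_tree_def is_tree_def folded_tree_simps
proof (intro conjI ballI impI)
  show "finite kept" using finite_subset[OF kept_verts G.finite_verts] .
  show "root G \<in> kept"
    using G.root_in_subtreeD siblings_props(5) G.root_in_verts unfolding kept_def by blast
  show "is_graph kept (edges G \<inter> kept \<times> kept)"
    using G.edge_refl G.edge_sym kept_verts unfolding is_graph_def by blast
  fix x y assume xy: "x \<in> kept" "y \<in> kept" "x \<noteq> y"
  then obtain p where p: "is_path (edges G) p x y" and p_unique: "\<And>q. is_path (edges G) q x y \<Longrightarrow> q = p"
    using G.unique_path kept_verts by (metis subsetD)
  show "\<exists>!p. is_path (edges G \<inter> kept \<times> kept) p x y"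
  proof (rule ex1I[of _ p])
    show "is_path (edges G \<inter> kept \<times> kept) p x y" using is_path_restrict[OF p path_in_kept[OF p xy(1,2)]] .
    fix q assume "is_path (edges G \<inter> kept \<times> kept) q x y"
    then show "q = p" by (rule p_unique[OF is_path_mono[OF _ Int_lower1]])
  qed
qed

sublocale F: rtree folded_tree
  by unfold_locales (rule folded_tree_rooted)

lemma root_path_folded: "b \<in> kept \<Longrightarrow> root_path folded_tree b = root_path G b"
  using F.root_path_unique G.root_path_is_path is_path_restrict kept_ancestor_closed kept_verts
  by (metis folded_tree_simps subsetD subsetI)

lemma fold_map_edge:
  assumes "(a, b) \<in> edges G"
  shows "(fold_map a, fold_map b) \<in> edges G \<inter> (kept \<times> kept)"
proof -
  have aV: "a \<in> verts G" and bV: "b \<in> verts G" using G.edge_in_verts assms by auto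
  have hinge: "(fold_map v, fold_map x2) \<in> edges G \<inter> (kept \<times> kept)"
              "(fold_map x2, fold_map v) \<in> edges G \<inter> (kept \<times> kept)"
    using G.parent_props(3,4)[OF siblings_props(1,4)] siblings_props(6) fold_map_x2 fold_map_kept v_kept
      subtree1_kept G.subtree_self[OF siblings_props(1)] by auto
  consider "a \<in> subtree G x2" "b \<in> subtree G x2" | "a \<notin> subtree G x2" "b \<notin> subtree G x2"
    | "a \<notin> subtree G x2" "b \<in> subtree G x2" | "a \<in> subtree G x2" "b \<notin> subtree G x2"
    by blast
  then show ?thesis
  proof cases
    case 1
    then have "fold_map a \<in> subtree G x1" "fold_map b \<in> subtree G x1"
      and "(f (fold_map a), f (fold_map b)) \<in> edges H"
      using fold_map_subtree2 f_edge[OF assms] by auto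
    then show ?thesis using edge_reflect[OF inj1] subtree1_kept by blast
  next
    case 2
    then show ?thesis using aV bV assms fold_map_kept unfolding kept_def by auto
  next
    case 3
    then show ?thesis using boundary_edge[OF assms] hinge by blast
  next
    case 4
    then show ?thesis using boundary_edge[OF G.edge_sym[OF assms]] hinge by blast
  qed
qed

lemma fold_map_retraction: "graph_retraction fold_map G folded_tree"
  unfolding graph_retraction_def folded_tree_simps
  using kept_verts fold_map_kept fold_map_into_kept fold_map_edge by blast

text \<open>Ancestors inside the subtree of x2 are mapped correctly because f reflects the order on the
  subtree of x1; ancestors outside it lie above v and are fixed.\<close>

lemma fold_map_ancestor:
  assumes bV: "b \<in> verts G" and ab: "a \<in> set (root_path G b)"
  shows "fold_map a \<in> set (root_path G (fold_map b))"
proof (cases "b \<in> subtree G x2")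
  case False
  then have "b \<in> kept" using bV unfolding kept_def by simp
  moreover have "a \<in> kept" using kept_ancestor_closed[OF \<open>b \<in> kept\<close> ab] .
  ultimately show ?thesis using ab fold_map_kept by simp
next
  case b2: True
  have aV: "a \<in> verts G" using G.ancestor_in_verts bV ab by blast
  have fb1: "fold_map b \<in> subtree G x1" using fold_map_subtree2[OF b2] by blast
  show ?thesis
  proof (cases "a \<in> subtree G x2")
    case True
    have "f (fold_map a) \<in> set (root_path H (f (fold_map b)))"
      using f_ancestor[OF bV ab] f_fold_map aV bV by simp
    then show ?thesis using ancestor_reflect[OF inj1] fold_map_subtree2[OF True] fb1 by blast
  next
    case False
    have "x2 \<in> set (root_path G b)" using b2 unfolding subtree_def by simp
    with G.ancestors_linear[OF bV ab]
    have "a \<in> set (root_path G x2) \<or> x2 \<in> set (root_path G a)" by blast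
    moreover have "x2 \<notin> set (root_path G a)" using False aV unfolding subtree_def by blast
    moreover have "a \<noteq> x2" using False G.subtree_self siblings_props(2) by blast
    ultimately have "a \<in> set (root_path G v)" using root_path_siblings by simp
    moreover have "v \<in> set (root_path G x1)"
      using root_path_siblings G.root_path_props(4)[OF v_in_verts] by simp
    ultimately have "a \<in> set (root_path G x1)" using G.ancestor_trans[OF siblings_props(1)] by blast
    moreover have "x1 \<in> set (root_path G (fold_map b))" using fb1 unfolding subtree_def by simp
    moreover have "fold_map b \<in> verts G" using fb1 G.subtree_subset by blast
    ultimately have "a \<in> set (root_path G (fold_map b))" using G.ancestor_trans by blast
    then show ?thesis using False aV fold_map_kept unfolding kept_def by simp
  qed
qed

lemma fold_map_epi: "epimorphism fold_map G folded_tree"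
proof (rule retraction_epimorphism[OF G.rooted folded_tree_rooted _ fold_map_retraction])
  show "edges folded_tree \<subseteq> verts folded_tree \<times> verts folded_tree" by auto
  fix a b assume "a \<in> verts G" "b \<in> verts G" "tree_le G a b"
  then show "tree_le folded_tree (fold_map a) (fold_map b)"
    using fold_map_ancestor G.tree_le_iff F.tree_le_iff root_path_folded fold_map_into_kept by simp
qed simp

lemma card_kept_less: "card kept < card (verts G)"
proof -
  have "x2 \<notin> kept" using G.subtree_self siblings_props(2) unfolding kept_def by blast
  then have "kept \<subset> verts G" using kept_verts siblings_props(2) by blast
  then show ?thesis using psubset_card_mono G.finite_verts by blast
qed

lemma f_folded_epi: "epimorphism f folded_tree H"
  using epimorphism_retract[OF epi folded_tree_rooted _ fold_map_retraction] f_fold_map by simp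

lemma f_folded_light: "light f folded_tree"
  using light_subgraph[OF light] kept_verts by simp

lemma f_folded_confluent: "confluent f folded_tree H"
  using confluent_retract[OF confluent G.finite_verts fold_map_retraction] f_fold_map by blast

lemma elementary_lc_at_siblings:
  assumes "epimorphism g G T" "inj_on g (subtree G x1)" "inj_on g (subtree G x2)"
    "g ` subtree G x1 = g ` subtree G x2" "component_of (edges T) (verts T - {g v}) (g ` subtree G x1)"
    "inj_on g (verts G - (subtree G x1 \<union> subtree G x2))"
  shows "elementary_lc g G T"
proof -
  have "component_of (edges G) (verts G - {v}) (subtree G x1)"
    "component_of (edges G) (verts G - {v}) (subtree G x2)"
    using G.subtree_component siblings_props by metis+
  moreover have "subtree G x1 \<noteq> subtree G x2"
    using subtrees_disjoint G.subtree_self siblings_props(1) by blast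
  ultimately show ?thesis unfolding elementary_lc_def using assms v_in_verts by blast
qed

lemma fold_map_elementary: "elementary_lc fold_map G folded_tree"
proof (rule elementary_lc_at_siblings[OF fold_map_epi])
  have "x1 \<in> kept" using subtree1_kept G.subtree_self siblings_props(1) by blast
  then have "parent folded_tree x1 = v" "subtree folded_tree x1 = subtree G x1"
    using root_path_folded siblings_props(6) subtree1_kept kept_verts
    unfolding parent_def subtree_def by auto
  moreover have fold1: "fold_map ` subtree G x1 = subtree G x1"
    using fold_map_kept subtree1_kept by (simp add: subset_iff)
  ultimately show "component_of (edges folded_tree) (verts folded_tree - {fold_map v}) (fold_map ` subtree G x1)"
    using F.subtree_component[of x1] \<open>x1 \<in> kept\<close> siblings_props(4) fold_map_kept[OF v_kept] by simp
  show "fold_map ` subtree G x1 = fold_map ` subtree G x2" using fold1 image_fold_map_subtree2 by simp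
  show "inj_on fold_map (subtree G x1)" using fold_map_kept subtree1_kept by (simp add: inj_on_def subset_iff)
  show "inj_on fold_map (subtree G x2)"
    using inj2 fold_map_subtree2 unfolding inj_on_def by metis
  show "inj_on fold_map (verts G - (subtree G x1 \<union> subtree G x2))"
    using fold_map_kept unfolding kept_def inj_on_def by auto
qed

lemma f_elementary_if_inj_kept:
  assumes "inj_on f kept"
  shows "elementary_lc f G H"
proof (rule elementary_lc_at_siblings[OF epi inj1 inj2 image_subtrees_eq])
  have "f v = parent H (f x1)" using f_parent siblings_props by metis
  then show "component_of (edges H) (verts H - {f v}) (f ` subtree G x1)"
    using H.subtree_component image_subtree f_parent f_verts siblings_props by metis
  show "inj_on f (verts G - (subtree G x1 \<union> subtree G x2))"
    using assms by (rule inj_on_subset) (auto simp: kept_def)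
qed

end

section \<open>Factorization into elementary light confluent epimorphisms\<close>

lemma foldl_compose:
  fixes a :: "'a \<Rightarrow> 'a"
  shows "foldl (\<lambda>acc g. g \<circ> acc) a fs = compose_list fs \<circ> a"
  unfolding compose_list_def
proof (induction fs arbitrary: a)
  case (Cons g fs)
  have step_a: "foldl (\<lambda>acc g. g \<circ> acc) a (g # fs) = foldl (\<lambda>acc g. g \<circ> acc) id fs \<circ> (g \<circ> a)"
    by (simp only: foldl_Cons) (rule Cons.IH)
  have step_id: "foldl (\<lambda>acc g. g \<circ> acc) id (g # fs) = foldl (\<lambda>acc g. g \<circ> acc) id fs \<circ> g"
    by (simp only: foldl_Cons comp_id) (rule Cons.IH)
  show ?case unfolding step_a step_id by (simp only: comp_assoc)
qed simp

lemma compose_list_Cons: "compose_list (g # fs) x = compose_list fs (g x)"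
  using foldl_compose[of g fs] unfolding compose_list_def by simp

definition elementary_lc_factorization :: "('a \<Rightarrow> 'b) \<Rightarrow> 'a rtree \<Rightarrow> 'b rtree \<Rightarrow> bool" where
  "elementary_lc_factorization f G H \<longleftrightarrow>
     (\<exists>(Ts :: 'a rtree list) (fs :: ('a \<Rightarrow> 'a) list) (g :: 'a \<Rightarrow> 'b).
       length Ts = Suc (length fs) \<and> Ts ! 0 = G \<and>
       (\<forall>i < length fs. elementary_lc (fs ! i) (Ts ! i) (Ts ! Suc i)) \<and>
       elementary_lc g (last Ts) H \<and>
       (\<forall>x \<in> verts G. f x = g (compose_list fs x)))"

lemma elementary_lc_factorization_single: "elementary_lc f G H \<Longrightarrow> elementary_lc_factorization f G H"
  unfolding elementary_lc_factorization_def
  by (rule exI[of _ "[G]"], rule exI[of _ "[]"], rule exI[of _ f]) (simp add: compose_list_def)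

lemma elementary_lc_factorization_Cons:
  fixes h :: "'a \<Rightarrow> 'a" and G T :: "'a rtree"
  assumes h: "elementary_lc h G T" and fact: "elementary_lc_factorization f' T H"
    and f: "\<And>x. x \<in> verts G \<Longrightarrow> f x = f' (h x)"
  shows "elementary_lc_factorization f G H"
proof -
  obtain Ts fs g where Ts: "length Ts = Suc (length fs)" "Ts ! 0 = T"
    "\<forall>i < length fs. elementary_lc (fs ! i) (Ts ! i) (Ts ! Suc i)"
    "elementary_lc g (last Ts) H" "\<forall>x \<in> verts T. f' x = g (compose_list fs x)"
    using fact unfolding elementary_lc_factorization_def by blast
  have "h x \<in> verts T" if "x \<in> verts G" for x
    using h that unfolding elementary_lc_def epimorphism_def by blast
  then have "\<forall>x \<in> verts G. f x = g (compose_list (h # fs) x)" using f Ts(5) compose_list_Cons by metis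
  moreover have "\<forall>i < length (h # fs). elementary_lc ((h # fs) ! i) ((G # Ts) ! i) ((G # Ts) ! Suc i)"
    using h Ts(2,3) by (auto simp: nth_Cons split: nat.split)
  moreover have "last (G # Ts) = last Ts" using Ts(1) by (cases Ts) auto
  ultimately show ?thesis
    unfolding elementary_lc_factorization_def using Ts(1,4)
    by (intro exI[of _ "G # Ts"] exI[of _ "h # fs"] exI[of _ g]) simp
qed

lemma light_confluent_elementary_factorization:
  "epimorphism f G H \<Longrightarrow> light f G \<Longrightarrow> confluent f G H \<Longrightarrow>
   inj_on f (verts G) \<or> elementary_lc_factorization f G H"
proof (induction "card (verts G)" arbitrary: G rule: less_induct)
  case less
  interpret light_confluent_epi G H f
    using less.prems by unfold_locales (auto simp: epimorphism_def)
  show ?case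
  proof (cases "inj_on f (verts G)")
    case False
    then obtain x1 x2 where "collapsed_siblings x1 x2" "inj_on f (subtree G x1)" "inj_on f (subtree G x2)"
      by (rule obtain_collapsed_siblings_inj)
    then interpret sibling_fold G H f x1 x2
      by unfold_locales
    have "inj_on f kept \<or> elementary_lc_factorization f folded_tree H"
      using less.hyps[OF _ f_folded_epi f_folded_light f_folded_confluent] card_kept_less by simp
    then show ?thesis
      using f_elementary_if_inj_kept elementary_lc_factorization_single
        elementary_lc_factorization_Cons[OF fold_map_elementary] f_fold_map by metis
  qed simp
qed

theorem corollary8p15:
  fixes f :: "'a \<Rightarrow> 'b" and G :: "'a rtree" and H :: "'b rtree"
  assumes "epimorphism f G H" and "light f G" and "confluent f G H"
  shows "inj_on f (verts G) \<or>
    (\<exists>(Ts :: 'a rtree list) (fs :: ('a \<Rightarrow> 'a) list) (g :: 'a \<Rightarrow> 'b).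
       length Ts = Suc (length fs) \<and> Ts ! 0 = G \<and>
       (\<forall>i < length fs. elementary_lc (fs ! i) (Ts ! i) (Ts ! Suc i)) \<and>
       elementary_lc g (last Ts) H \<and>
       (\<forall>x \<in> verts G. f x = g (compose_list fs x)))"
  using light_confluent_elementary_factorization[OF assms]
  unfolding elementary_lc_factorization_def .

end
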